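(* Let $(\vdash,\overline{\cdot},\widehat{\cdot})$ be a setting satisfying Pre-Relevance, let $\mathcal{S},\mathcal{S}'\subseteq\mathcal{L}$ with $\mathcal{S}\mid\mathcal{S}'$, let $\mathcal{E}$ be a complete extension of $\mathcal{AF}_{\vdash}(\mathcal{S}\cup\mathcal{S}')$, $\mathcal{E}_1=\mathcal{E}\cap\mathit{Arg}_{\vdash}(\mathcal{S})$ and $\mathcal{E}_2=\mathcal{E}\cap\mathit{Arg}_{\vdash}(\mathcal{S}')$. Then (1) $\mathcal{E}=\mathsf{Defended}(\mathcal{E}_1\cup\mathcal{E}_2,\mathcal{AF}_{\vdash}(\mathcal{S}\cup\mathcal{S}'))$, and (2) $\mathcal{E}_1$ is a complete extension of $\mathcal{AF}_{\vdash}(\mathcal{S})$.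
   Context: $\mathcal{L}$ is the set of formulas of a language built from propositional atoms; $\mathsf{Atoms}(\mathcal{S})$ is the set of atoms occurring in $\mathcal{S}$, and $\mathcal{S}_1\mid\mathcal{S}_2$ means $\mathsf{Atoms}(\mathcal{S}_1)\cap\mathsf{Atoms}(\mathcal{S}_2)=\emptyset$. A setting is $(\vdash,\overline{\cdot},\widehat{\cdot})$ with ${\vdash}\subseteq\wp_{\sf fin}(\mathcal{L})\times\mathcal{L}$ arbitrary, $\overline{\cdot}:\mathcal{L}\to\wp(\mathcal{L})$, $\widehat{\cdot}$ assigning to each nonempty finite set a finite set of formulas, with $\widehat{\emptyset}=\emptyset$. $\mathit{Arg}_{\vdash}(\mathcal{S})=\{(\Gamma,\gamma):\Gamma\subseteq\mathcal{S}\text{ finite},\Gamma\vdash\gamma\}$; $\mathcal{AF}_{\vdash}(\mathcal{S})$ is the attack graph on it where $(\Gamma,\gamma)$ attacks $(\Gamma',\gamma')$ iff $\gamma\in\overline{\phi}$ for some $\phi\in\widehat{\Gamma'}$. $\mathcal{A}$ defends $a$ iff every attacker of $a$ in the framework is attacked by a member of $\mathcal{A}$; $\mathsf{Defended}(\mathcal{A},\mathcal{AF}_{\vdash}(\mathcal{S}))$ is the set of arguments of $\mathit{Arg}_{\vdash}(\mathcal{S})$ defended by $\mathcal{A}$. Complete = conflict-free, defends all its members, and contains every argument it defends. Pre-Relevance of the setting: (a) for all $\mathcal{S}_1,\mathcal{S}_2,\phi$ with $\mathcal{S}_1\cup\{\phi\}\mid\mathcal{S}_2$, $\mathcal{S}_1\cup\mathcal{S}_2\vdash\phi$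 implies $\mathcal{S}_1'\vdash\phi$ for some $\mathcal{S}_1'\subseteq\mathcal{S}_1$; (b) primeness: for all sets of atoms $\mathcal{A}_1\mid\mathcal{A}_2$, all finite $\mathcal{S}_1,\mathcal{T}_1,\mathcal{S}_2,\mathcal{T}_2$ with $\mathsf{Atoms}(\mathcal{S}_i),\mathsf{Atoms}(\mathcal{T}_i)\subseteq\mathcal{A}_i$, and all $\phi,\psi$ with $\psi\in\overline{\phi}$, $\phi\in\widehat{\mathcal{T}_1\cup\mathcal{T}_2}$: if $\mathcal{S}_1\cup\mathcal{S}_2\vdash\psi$ then there are $i\in\{1,2\}$, $\mathcal{S}_i'\subseteq\mathcal{S}_i$, $\phi_i\in\widehat{\mathcal{T}_i}$, $\psi_i\in\overline{\phi_i}$ with $\mathcal{S}_i'\vdash\psi_i$; (c) $\widehat{\Delta}\subseteq\widehat{\Delta\cup\Delta'}$ for all finite $\Delta,\Delta'$. *)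

theory Defs
  imports Main
begin

definition Atoms :: "('f \<Rightarrow> 'a set) \<Rightarrow> 'f set \<Rightarrow> 'a set" where
  "Atoms atoms S = (\<Union>\<phi>\<in>S. atoms \<phi>)"

definition disjoint_atoms :: "('f \<Rightarrow> 'a set) \<Rightarrow> 'f set \<Rightarrow> 'f set \<Rightarrow> bool" where
  "disjoint_atoms atoms S1 S2 \<longleftrightarrow> Atoms atoms S1 \<inter> Atoms atoms S2 = {}"

definition setting :: "('f set \<Rightarrow> 'f \<Rightarrow> bool) \<Rightarrow> ('f \<Rightarrow> 'f set) \<Rightarrow> ('f set \<Rightarrow> 'f set) \<Rightarrow> bool" where
  "setting vdash contr hat \<longleftrightarrow>
     (\<forall>\<Gamma> \<gamma>. vdash \<Gamma> \<gamma> \<longrightarrow> finite \<Gamma>) \<and>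
     (\<forall>\<Delta>. finite \<Delta> \<longrightarrow> finite (hat \<Delta>)) \<and>
     hat {} = {}"

definition Arg :: "('f set \<Rightarrow> 'f \<Rightarrow> bool) \<Rightarrow> 'f set \<Rightarrow> ('f set \<times> 'f) set" where
  "Arg vdash S = {(\<Gamma>, \<gamma>). \<Gamma> \<subseteq> S \<and> finite \<Gamma> \<and> vdash \<Gamma> \<gamma>}"

definition attacks :: "('f \<Rightarrow> 'f set) \<Rightarrow> ('f set \<Rightarrow> 'f set) \<Rightarrow> ('f set \<times> 'f) \<Rightarrow> ('f set \<times> 'f) \<Rightarrow> bool" where
  "attacks contr hat a b \<longleftrightarrow> (\<exists>\<phi>\<in>hat (fst b). snd a \<in> contr \<phi>)"

definition Defended :: "('f set \<Rightarrow> 'f \<Rightarrow> bool) \<Rightarrow> ('f \<Rightarrow> 'f set) \<Rightarrow> ('f set \<Rightarrow> 'f set)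
    \<Rightarrow> ('f set \<times> 'f) set \<Rightarrow> 'f set \<Rightarrow> ('f set \<times> 'f) set" where
  "Defended vdash contr hat A S =
     {a \<in> Arg vdash S. \<forall>b \<in> Arg vdash S. attacks contr hat b a \<longrightarrow> (\<exists>c\<in>A. attacks contr hat c b)}"

definition conflict_free :: "('f \<Rightarrow> 'f set) \<Rightarrow> ('f set \<Rightarrow> 'f set) \<Rightarrow> ('f set \<times> 'f) set \<Rightarrow> bool" where
  "conflict_free contr hat E \<longleftrightarrow> (\<forall>a\<in>E. \<forall>b\<in>E. \<not> attacks contr hat a b)"

definition complete_ext :: "('f set \<Rightarrow> 'f \<Rightarrow> bool) \<Rightarrow> ('f \<Rightarrow> 'f set) \<Rightarrow> ('f set \<Rightarrow> 'f set)
    \<Rightarrow> 'f set \<Rightarrow> ('f set \<times> 'f) set \<Rightarrow> bool" where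
  "complete_ext vdash contr hat S E \<longleftrightarrow>
     E \<subseteq> Arg vdash S \<and> conflict_free contr hat E \<and>
     E \<subseteq> Defended vdash contr hat E S \<and>
     Defended vdash contr hat E S \<subseteq> E"

definition pre_relevance :: "('f \<Rightarrow> 'a set) \<Rightarrow> ('f set \<Rightarrow> 'f \<Rightarrow> bool) \<Rightarrow> ('f \<Rightarrow> 'f set)
    \<Rightarrow> ('f set \<Rightarrow> 'f set) \<Rightarrow> bool" where
  "pre_relevance atoms vdash contr hat \<longleftrightarrow>
     (\<forall>S1 S2 \<phi>. disjoint_atoms atoms (S1 \<union> {\<phi>}) S2 \<longrightarrow> vdash (S1 \<union> S2) \<phi> \<longrightarrow>
        (\<exists>S1'. S1' \<subseteq> S1 \<and> vdash S1' \<phi>)) \<and>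
     (\<forall>A1 A2 S1 T1 S2 T2 \<phi> \<psi>.
        A1 \<inter> A2 = {} \<longrightarrow>
        finite S1 \<longrightarrow> finite T1 \<longrightarrow> finite S2 \<longrightarrow> finite T2 \<longrightarrow>
        Atoms atoms S1 \<subseteq> A1 \<longrightarrow> Atoms atoms T1 \<subseteq> A1 \<longrightarrow>
        Atoms atoms S2 \<subseteq> A2 \<longrightarrow> Atoms atoms T2 \<subseteq> A2 \<longrightarrow>
        \<psi> \<in> contr \<phi> \<longrightarrow> \<phi> \<in> hat (T1 \<union> T2) \<longrightarrow> vdash (S1 \<union> S2) \<psi> \<longrightarrow>
        ((\<exists>S1' \<phi>1 \<psi>1. S1' \<subseteq> S1 \<and> \<phi>1 \<in> hat T1 \<and> \<psi>1 \<in> contr \<phi>1 \<and> vdash S1' \<psi>1) \<or>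
         (\<exists>S2' \<phi>2 \<psi>2. S2' \<subseteq> S2 \<and> \<phi>2 \<in> hat T2 \<and> \<psi>2 \<in> contr \<phi>2 \<and> vdash S2' \<psi>2))) \<and>
     (\<forall>\<Delta> \<Delta>'. finite \<Delta> \<longrightarrow> finite \<Delta>' \<longrightarrow> hat \<Delta> \<subseteq> hat (\<Delta> \<union> \<Delta>'))"

end

theory Submission
  imports Defs
begin

text \<open>Since \<open>hat\<close> is monotone, an attack on an argument is also an attack on every argument
  with larger premises. Hence a complete extension contains, together with an argument, every
  argument built from part of its premises, and primeness lets any attacker be replaced by such a
  sub-argument whose premises lie entirely on one side of the atom partition of \<open>S \<union> S'\<close>.
  This turns every defence in the joint framework into a defence by arguments of one of the
  two parts, and every attack on an argument over \<open>S\<close> into one by an argument over \<open>S\<close>.\<close>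

lemma Atoms_mono: "A \<subseteq> B \<Longrightarrow> Atoms atoms A \<subseteq> Atoms atoms B"
  unfolding Atoms_def by blast

lemma Defended_mono: "A \<subseteq> B \<Longrightarrow> Defended vdash contr hat A T \<subseteq> Defended vdash contr hat B T"
  unfolding Defended_def by blast

lemma DefendedI:
  assumes "a \<in> Arg vdash T"
    and "\<And>b. b \<in> Arg vdash T \<Longrightarrow> attacks contr hat b a \<Longrightarrow> \<exists>c\<in>A. attacks contr hat c b"
  shows "a \<in> Defended vdash contr hat A T"
  using assms unfolding Defended_def by blast

lemma DefendedE:
  assumes "a \<in> Defended vdash contr hat A T" and "b \<in> Arg vdash T" and "attacks contr hat b a"
  obtains c where "c \<in> A" "attacks contr hat c b"
  using assms unfolding Defended_def by blast

lemma Defended_Arg: "a \<in> Defended vdash contr hat A T \<Longrightarrow> a \<in> Arg vdash T"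
  unfolding Defended_def by blast

lemma hat_mono:
  assumes "pre_relevance atoms vdash contr hat" and "finite B" and "A \<subseteq> B"
  shows "hat A \<subseteq> hat B"
proof -
  have hat_Un: "\<forall>\<Delta> \<Delta>'. finite \<Delta> \<longrightarrow> finite \<Delta>' \<longrightarrow> hat \<Delta> \<subseteq> hat (\<Delta> \<union> \<Delta>')"
    using assms(1) unfolding pre_relevance_def by (rule conjunct2[OF conjunct2])
  have "finite A" using assms(2,3) by (rule finite_subset[rotated])
  then have "hat A \<subseteq> hat (A \<union> B)" using hat_Un assms(2) by blast
  then show ?thesis using assms(3) by (simp add: sup_absorb2)
qed

lemma attacks_superargument:
  assumes "pre_relevance atoms vdash contr hat" and "finite (fst b)" and "fst a \<subseteq> fst b"
    and "attacks contr hat c a"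
  shows "attacks contr hat c b"
  using hat_mono[OF assms(1-3)] assms(4) unfolding attacks_def by (meson subsetD)

lemma complete_ext_subargument:
  assumes pr: "pre_relevance atoms vdash contr hat"
    and ce: "complete_ext vdash contr hat T E"
    and cE: "c \<in> E" and G: "G \<subseteq> fst c" and vd: "vdash G \<psi>"
  shows "(G, \<psi>) \<in> E"
proof -
  have cA: "c \<in> Arg vdash T" and cD: "c \<in> Defended vdash contr hat E T"
    using ce cE unfolding complete_ext_def by blast+
  then have "finite (fst c)" by (auto simp: Arg_def)
  then have "(G, \<psi>) \<in> Arg vdash T"
    using cA G vd finite_subset unfolding Arg_def by fastforce
  moreover have "attacks contr hat b c" if "attacks contr hat b (G, \<psi>)" for b
    using attacks_superargument[OF pr \<open>finite (fst c)\<close> _ that] G by simp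
  ultimately have "(G, \<psi>) \<in> Defended vdash contr hat E T"
    using cD unfolding Defended_def by blast
  then show ?thesis using ce unfolding complete_ext_def by blast
qed

lemma prime_attack_split:
  assumes pr: "pre_relevance atoms vdash contr hat"
    and dj: "disjoint_atoms atoms S S'"
    and c: "c \<in> Arg vdash (S \<union> S')"
    and T: "finite T" "T \<subseteq> S" and T': "finite T'" "T' \<subseteq> S'"
    and att: "attacks contr hat c (T \<union> T', \<delta>)"
  obtains G \<psi> \<phi> where "G \<subseteq> fst c \<inter> S" "vdash G \<psi>" "\<phi> \<in> hat T" "\<psi> \<in> contr \<phi>"
    | G \<psi> \<phi> where "G \<subseteq> fst c \<inter> S'" "vdash G \<psi>" "\<phi> \<in> hat T'" "\<psi> \<in> contr \<phi>"
proof -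
  have prime: "\<forall>A1 A2 S1 T1 S2 T2 \<phi> \<psi>.
        A1 \<inter> A2 = {} \<longrightarrow>
        finite S1 \<longrightarrow> finite T1 \<longrightarrow> finite S2 \<longrightarrow> finite T2 \<longrightarrow>
        Atoms atoms S1 \<subseteq> A1 \<longrightarrow> Atoms atoms T1 \<subseteq> A1 \<longrightarrow>
        Atoms atoms S2 \<subseteq> A2 \<longrightarrow> Atoms atoms T2 \<subseteq> A2 \<longrightarrow>
        \<psi> \<in> contr \<phi> \<longrightarrow> \<phi> \<in> hat (T1 \<union> T2) \<longrightarrow> vdash (S1 \<union> S2) \<psi> \<longrightarrow>
        ((\<exists>S1' \<phi>1 \<psi>1. S1' \<subseteq> S1 \<and> \<phi>1 \<in> hat T1 \<and> \<psi>1 \<in> contr \<phi>1 \<and> vdash S1' \<psi>1) \<or>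
         (\<exists>S2' \<phi>2 \<psi>2. S2' \<subseteq> S2 \<and> \<phi>2 \<in> hat T2 \<and> \<psi>2 \<in> contr \<phi>2 \<and> vdash S2' \<psi>2))"
    using pr unfolding pre_relevance_def by (rule conjunct1[OF conjunct2])
  have split_c: "fst c = (fst c \<inter> S) \<union> (fst c \<inter> S')" and fc: "finite (fst c)"
    and vc: "vdash (fst c) (snd c)"
    using c unfolding Arg_def by auto
  obtain \<phi> where \<phi>: "\<phi> \<in> hat (T \<union> T')" and \<psi>: "snd c \<in> contr \<phi>"
    using att unfolding attacks_def by auto
  have "Atoms atoms S \<inter> Atoms atoms S' = {}" using dj unfolding disjoint_atoms_def .
  moreover have "Atoms atoms (fst c \<inter> S) \<subseteq> Atoms atoms S" "Atoms atoms T \<subseteq> Atoms atoms S"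
    "Atoms atoms (fst c \<inter> S') \<subseteq> Atoms atoms S'" "Atoms atoms T' \<subseteq> Atoms atoms S'"
    using T T' by (simp_all add: Atoms_mono)
  moreover have "vdash ((fst c \<inter> S) \<union> (fst c \<inter> S')) (snd c)" using vc split_c by simp
  ultimately have "(\<exists>G \<phi>1 \<psi>1. G \<subseteq> fst c \<inter> S \<and> \<phi>1 \<in> hat T \<and> \<psi>1 \<in> contr \<phi>1 \<and> vdash G \<psi>1) \<or>
      (\<exists>G \<phi>2 \<psi>2. G \<subseteq> fst c \<inter> S' \<and> \<phi>2 \<in> hat T' \<and> \<psi>2 \<in> contr \<phi>2 \<and> vdash G \<psi>2)"
    using prime[rule_format, of "Atoms atoms S" "Atoms atoms S'" "fst c \<inter> S" T
        "fst c \<inter> S'" T' "snd c" \<phi>] \<psi> \<phi> fc T T' by simp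
  then show ?thesis using that by blast
qed

lemma subargument_in_Arg:
  assumes "c \<in> Arg vdash U" "G \<subseteq> fst c \<inter> X" "vdash G \<psi>"
  shows "(G, \<psi>) \<in> Arg vdash X"
  using assms finite_subset unfolding Arg_def by fastforce

lemma attacker_restricts_to_part:
  assumes pr: "pre_relevance atoms vdash contr hat"
    and dj: "disjoint_atoms atoms S S'"
    and c: "c \<in> Arg vdash (S \<union> S')" and b: "b \<in> Arg vdash (S \<union> S')"
    and att: "attacks contr hat c b"
  obtains G \<psi> where "G \<subseteq> fst c" "(G, \<psi>) \<in> Arg vdash S \<union> Arg vdash S'"
    "attacks contr hat (G, \<psi>) b"
proof -
  have fb: "finite (fst b)" and split_b: "fst b = (fst b \<inter> S) \<union> (fst b \<inter> S')"
    using b unfolding Arg_def by auto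
  have lift: "attacks contr hat (G, \<psi>) b" if "\<phi> \<in> hat (fst b \<inter> X)" "\<psi> \<in> contr \<phi>" for G \<psi> \<phi> X
  proof -
    have "attacks contr hat (G, \<psi>) (fst b \<inter> X, snd b)"
      using that unfolding attacks_def by auto
    then show ?thesis by (rule attacks_superargument[OF pr fb, rotated]) simp
  qed
  have att': "attacks contr hat c ((fst b \<inter> S) \<union> (fst b \<inter> S'), snd b)"
    using att split_b unfolding attacks_def by simp
  have "finite (fst b \<inter> S)" "finite (fst b \<inter> S')" using fb by simp_all
  then show ?thesis
  proof (rule prime_attack_split[OF pr dj c _ Int_lower2 _ Int_lower2 att'])
    fix G \<psi> \<phi>
    assume G: "G \<subseteq> fst c \<inter> S" and vd: "vdash G \<psi>"
      and \<phi>: "\<phi> \<in> hat (fst b \<inter> S)" and \<psi>: "\<psi> \<in> contr \<phi>"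
    from \<phi> \<psi> have "attacks contr hat (G, \<psi>) b" by (rule lift)
    moreover have "(G, \<psi>) \<in> Arg vdash S" using subargument_in_Arg[OF c G vd] .
    ultimately show ?thesis using that G by blast
  next
    fix G \<psi> \<phi>
    assume G: "G \<subseteq> fst c \<inter> S'" and vd: "vdash G \<psi>"
      and \<phi>: "\<phi> \<in> hat (fst b \<inter> S')" and \<psi>: "\<psi> \<in> contr \<phi>"
    from \<phi> \<psi> have "attacks contr hat (G, \<psi>) b" by (rule lift)
    moreover have "(G, \<psi>) \<in> Arg vdash S'" using subargument_in_Arg[OF c G vd] .
    ultimately show ?thesis using that G by blast
  qed
qed

lemma attacker_of_part_restricts:
  assumes pr: "pre_relevance atoms vdash contr hat" and hat0: "hat {} = {}"
    and dj: "disjoint_atoms atoms S S'"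
    and c: "c \<in> Arg vdash (S \<union> S')" and a: "a \<in> Arg vdash S"
    and att: "attacks contr hat c a"
  obtains G \<psi> where "G \<subseteq> fst c" "(G, \<psi>) \<in> Arg vdash S" "attacks contr hat (G, \<psi>) a"
proof -
  have fa: "finite (fst a)" and aS: "fst a \<subseteq> S" using a unfolding Arg_def by auto
  have att': "attacks contr hat c (fst a \<union> {}, snd a)" using att unfolding attacks_def by simp
  show ?thesis
  proof (rule prime_attack_split[OF pr dj c fa aS finite.emptyI empty_subsetI att'])
    fix G \<psi> \<phi>
    assume G: "G \<subseteq> fst c \<inter> S" and vd: "vdash G \<psi>" and "\<phi> \<in> hat (fst a)" "\<psi> \<in> contr \<phi>"
    then have "attacks contr hat (G, \<psi>) a" unfolding attacks_def by auto
    moreover have "(G, \<psi>) \<in> Arg vdash S" using subargument_in_Arg[OF c G vd] .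
    ultimately show ?thesis using that G by blast
  next
    fix G \<psi> \<phi>
    assume "G \<subseteq> fst c \<inter> S'" "vdash G \<psi>" "\<phi> \<in> hat {}" "\<psi> \<in> contr \<phi>"
    then show ?thesis using hat0 by simp
  qed
qed

lemma complete_ext_part_attacker:
  assumes pr: "pre_relevance atoms vdash contr hat"
    and dj: "disjoint_atoms atoms S S'"
    and ce: "complete_ext vdash contr hat (S \<union> S') E"
    and cE: "c \<in> E" and b: "b \<in> Arg vdash (S \<union> S')" and att: "attacks contr hat c b"
  shows "\<exists>c'\<in>(E \<inter> Arg vdash S) \<union> (E \<inter> Arg vdash S'). attacks contr hat c' b"
proof -
  have c: "c \<in> Arg vdash (S \<union> S')" using ce cE unfolding complete_ext_def by blast
  obtain G \<psi> where G: "G \<subseteq> fst c" and GA: "(G, \<psi>) \<in> Arg vdash S \<union> Arg vdash S'"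
    and "attacks contr hat (G, \<psi>) b"
    using attacker_restricts_to_part[OF pr dj c b att] .
  moreover have "(G, \<psi>) \<in> E"
    using complete_ext_subargument[OF pr ce cE G] GA unfolding Arg_def by blast
  ultimately show ?thesis by blast
qed

lemma complete_ext_eq_Defended_parts:
  assumes pr: "pre_relevance atoms vdash contr hat"
    and dj: "disjoint_atoms atoms S S'"
    and ce: "complete_ext vdash contr hat (S \<union> S') E"
  shows "E = Defended vdash contr hat ((E \<inter> Arg vdash S) \<union> (E \<inter> Arg vdash S')) (S \<union> S')"
proof
  show "E \<subseteq> Defended vdash contr hat ((E \<inter> Arg vdash S) \<union> (E \<inter> Arg vdash S')) (S \<union> S')"
  proof
    fix a
    assume "a \<in> E"
    then have aD: "a \<in> Defended vdash contr hat E (S \<union> S')"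
      using ce unfolding complete_ext_def by blast
    show "a \<in> Defended vdash contr hat ((E \<inter> Arg vdash S) \<union> (E \<inter> Arg vdash S')) (S \<union> S')"
    proof (rule DefendedI[OF Defended_Arg[OF aD]])
      fix b
      assume b: "b \<in> Arg vdash (S \<union> S')" and ba: "attacks contr hat b a"
      obtain c where "c \<in> E" "attacks contr hat c b" using aD b ba by (rule DefendedE)
      then show "\<exists>c\<in>(E \<inter> Arg vdash S) \<union> (E \<inter> Arg vdash S'). attacks contr hat c b"
        using complete_ext_part_attacker[OF pr dj ce _ b] by blast
    qed
  qed
next
  have "Defended vdash contr hat ((E \<inter> Arg vdash S) \<union> (E \<inter> Arg vdash S')) (S \<union> S')
      \<subseteq> Defended vdash contr hat E (S \<union> S')"
    by (rule Defended_mono) blast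
  then show "Defended vdash contr hat ((E \<inter> Arg vdash S) \<union> (E \<inter> Arg vdash S')) (S \<union> S') \<subseteq> E"
    using ce unfolding complete_ext_def by blast
qed

lemma complete_ext_restrict_part_defends:
  assumes pr: "pre_relevance atoms vdash contr hat" and hat0: "hat {} = {}"
    and dj: "disjoint_atoms atoms S S'"
    and ce: "complete_ext vdash contr hat (S \<union> S') E"
  shows "E \<inter> Arg vdash S \<subseteq> Defended vdash contr hat (E \<inter> Arg vdash S) S"
proof
  fix a
  assume a: "a \<in> E \<inter> Arg vdash S"
  then have aD: "a \<in> Defended vdash contr hat E (S \<union> S')"
    using ce unfolding complete_ext_def by blast
  show "a \<in> Defended vdash contr hat (E \<inter> Arg vdash S) S"
  proof (rule DefendedI)
    show "a \<in> Arg vdash S" using a by blast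
  next
    fix b
    assume bS: "b \<in> Arg vdash S" and ba: "attacks contr hat b a"
    have "b \<in> Arg vdash (S \<union> S')" using bS unfolding Arg_def by auto
    then obtain c where cE: "c \<in> E" and cb: "attacks contr hat c b"
      using aD ba by (meson DefendedE)
    have "c \<in> Arg vdash (S \<union> S')" using ce cE unfolding complete_ext_def by blast
    then obtain G \<psi> where G: "G \<subseteq> fst c" and GS: "(G, \<psi>) \<in> Arg vdash S"
      and Gb: "attacks contr hat (G, \<psi>) b"
      using attacker_of_part_restricts[OF pr hat0 dj _ bS cb] by blast
    have "(G, \<psi>) \<in> E"
      using complete_ext_subargument[OF pr ce cE G] GS unfolding Arg_def by blast
    with GS Gb show "\<exists>c\<in>E \<inter> Arg vdash S. attacks contr hat c b" by blast
  qed
qed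

lemma complete_ext_restrict_part_closed:
  assumes pr: "pre_relevance atoms vdash contr hat" and hat0: "hat {} = {}"
    and dj: "disjoint_atoms atoms S S'"
    and ce: "complete_ext vdash contr hat (S \<union> S') E"
  shows "Defended vdash contr hat (E \<inter> Arg vdash S) S \<subseteq> E \<inter> Arg vdash S"
proof
  fix a
  assume aD: "a \<in> Defended vdash contr hat (E \<inter> Arg vdash S) S"
  note aS = Defended_Arg[OF aD]
  have "a \<in> Defended vdash contr hat E (S \<union> S')"
  proof (rule DefendedI)
    show "a \<in> Arg vdash (S \<union> S')" using aS unfolding Arg_def by auto
  next
    fix b
    assume b: "b \<in> Arg vdash (S \<union> S')" and "attacks contr hat b a"
    then obtain G \<psi> where G: "G \<subseteq> fst b" and GS: "(G, \<psi>) \<in> Arg vdash S"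
      and "attacks contr hat (G, \<psi>) a"
      using attacker_of_part_restricts[OF pr hat0 dj _ aS] by blast
    then obtain c where cE: "c \<in> E \<inter> Arg vdash S" and cG: "attacks contr hat c (G, \<psi>)"
      using aD by (meson DefendedE)
    have "finite (fst b)" using b unfolding Arg_def by auto
    then have "attacks contr hat c b" using attacks_superargument[OF pr _ _ cG] G by simp
    with cE show "\<exists>c\<in>E. attacks contr hat c b" by blast
  qed
  then show "a \<in> E \<inter> Arg vdash S" using ce aS unfolding complete_ext_def by blast
qed

lemma complete_ext_restrict_part:
  assumes pr: "pre_relevance atoms vdash contr hat" and hat0: "hat {} = {}"
    and dj: "disjoint_atoms atoms S S'"
    and ce: "complete_ext vdash contr hat (S \<union> S') E"
  shows "complete_ext vdash contr hat S (E \<inter> Arg vdash S)"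
proof -
  have "conflict_free contr hat (E \<inter> Arg vdash S)"
    using ce unfolding complete_ext_def conflict_free_def by blast
  then show ?thesis
    using complete_ext_restrict_part_defends[OF assms] complete_ext_restrict_part_closed[OF assms]
    unfolding complete_ext_def by blast
qed

theorem lemma5:
  fixes atoms :: "'f \<Rightarrow> 'a set"
    and vdash :: "'f set \<Rightarrow> 'f \<Rightarrow> bool"
    and contr :: "'f \<Rightarrow> 'f set"
    and hat :: "'f set \<Rightarrow> 'f set"
    and S S' :: "'f set"
    and E :: "('f set \<times> 'f) set"
  assumes "setting vdash contr hat"
    and "pre_relevance atoms vdash contr hat"
    and "disjoint_atoms atoms S S'"
    and "complete_ext vdash contr hat (S \<union> S') E"
  shows "E = Defended vdash contr hat ((E \<inter> Arg vdash S) \<union> (E \<inter> Arg vdash S')) (S \<union> S') \<and>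
         complete_ext vdash contr hat S (E \<inter> Arg vdash S)"
proof
  show "E = Defended vdash contr hat ((E \<inter> Arg vdash S) \<union> (E \<inter> Arg vdash S')) (S \<union> S')"
    using complete_ext_eq_Defended_parts[OF assms(2-4)] .
  have "hat {} = {}" using assms(1) unfolding setting_def by blast
  then show "complete_ext vdash contr hat S (E \<inter> Arg vdash S)"
    using complete_ext_restrict_part[OF assms(2) _ assms(3,4)] by blast
qed

end
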